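(* Let $U\subseteq S$ be measurable, $\gamma\in(0,1)$, $r(s,a,s')=\mathbf 1_{\{s\in U\}}$, and $\pi$ a stationary policy. Let $I\subseteq S$ be a measurable set that is absorbing under $\pi$, and assume $\Pr_\pi(\tau_U<\infty\mid S_0=s)=1$ for all $s\in I\setminus U$. Then for all $s\in I\setminus U$, $$\mathbb{E}_\pi[V^\pi(S_1)\mid S_0=s]-V^\pi(s)>0.$$
   Context: $(S,\mathit{Act},P,\mu)$ is an MDP with state/action spaces finite/countable or Borel subsets of Euclidean space. A stationary policy $\pi$ is a stochastic kernel on $\mathit{Act}$ given $S$; $\Pr_\pi(\cdot\mid S_0=s)$, $\mathbb{E}_\pi[\cdot\mid S_0=s]$ refer to the process with $S_0=s$, $A_t\sim\pi(\cdot\mid S_t)$, $S_{t+1}\sim P(\cdot\mid S_t,A_t)$. Value function: $V^\pi(s)=\mathbb{E}_\pi[\sum_{t\ge0}\gamma^t r(S_t,A_t,S_{t+1})\mid S_0=s]$. A measurable set $X$ is absorbing under $\pi$ if $\Pr_\pi(S_1\in X\mid S_0=s)=1$ for all $s\in X$. $\tau_U:=\inf\{t\ge0:S_t\in U\}$, $\inf\emptyset=\infty$. *)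

theory Defs
  imports "HOL-Probability.Probability"
begin

text \<open>The state-action process
  Z_t = (S_t, A_t) started at S_0 = s is built by the Ionescu-Tulcea theorem
  as a measure on paths nat => (S x Act).\<close>

definition sa_dist :: "'s measure \<Rightarrow> 'a measure \<Rightarrow> ('s \<Rightarrow> 'a measure) \<Rightarrow> 's \<Rightarrow> ('s \<times> 'a) measure" where
  "sa_dist Sm Am pol s = distr (pol s) (Sm \<Otimes>\<^sub>M Am) (\<lambda>a. (s, a))"

definition mdp_kernel :: "'s measure \<Rightarrow> 'a measure \<Rightarrow> ('s \<times> 'a \<Rightarrow> 's measure) \<Rightarrow> ('s \<Rightarrow> 'a measure)
    \<Rightarrow> 's \<Rightarrow> nat \<Rightarrow> (nat \<Rightarrow> 's \<times> 'a) \<Rightarrow> ('s \<times> 'a) measure" where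
  "mdp_kernel Sm Am P pol s i \<omega> =
     (if i = 0 then sa_dist Sm Am pol s
      else P (\<omega> (i - 1)) \<bind> (\<lambda>s'. sa_dist Sm Am pol s'))"

definition mdp_path :: "'s measure \<Rightarrow> 'a measure \<Rightarrow> ('s \<times> 'a \<Rightarrow> 's measure) \<Rightarrow> ('s \<Rightarrow> 'a measure)
    \<Rightarrow> 's \<Rightarrow> (nat \<Rightarrow> 's \<times> 'a) measure" where
  "mdp_path Sm Am P pol s =
     projective_family.lim UNIV
       (Ionescu_Tulcea.CI (mdp_kernel Sm Am P pol s) (\<lambda>_. Sm \<Otimes>\<^sub>M Am)) (\<lambda>_. Sm \<Otimes>\<^sub>M Am)"

definition is_mdp :: "'s measure \<Rightarrow> 'a measure \<Rightarrow> ('s \<times> 'a \<Rightarrow> 's measure) \<Rightarrow> ('s \<Rightarrow> 'a measure) \<Rightarrow> bool" where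
  "is_mdp Sm Am P pol \<longleftrightarrow>
     P \<in> measurable (Sm \<Otimes>\<^sub>M Am) (prob_algebra Sm) \<and> pol \<in> measurable Sm (prob_algebra Am)"

definition value_fun :: "'s measure \<Rightarrow> 'a measure \<Rightarrow> ('s \<times> 'a \<Rightarrow> 's measure) \<Rightarrow> ('s \<Rightarrow> 'a measure)
    \<Rightarrow> ('s \<Rightarrow> 'a \<Rightarrow> 's \<Rightarrow> real) \<Rightarrow> real \<Rightarrow> 's \<Rightarrow> real" where
  "value_fun Sm Am P pol r \<gamma> s =
     (\<integral>\<omega>. (\<Sum>t. \<gamma> ^ t * r (fst (\<omega> t)) (snd (\<omega> t)) (fst (\<omega> (Suc t)))) \<partial>mdp_path Sm Am P pol s)"

definition hit_time :: "'s set \<Rightarrow> (nat \<Rightarrow> 's \<times> 'a) \<Rightarrow> enat" where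
  "hit_time U \<omega> = Inf {enat t | t. fst (\<omega> t) \<in> U}"

definition absorbing :: "'s measure \<Rightarrow> 'a measure \<Rightarrow> ('s \<times> 'a \<Rightarrow> 's measure) \<Rightarrow> ('s \<Rightarrow> 'a measure)
    \<Rightarrow> 's set \<Rightarrow> bool" where
  "absorbing Sm Am P pol X \<longleftrightarrow>
     (\<forall>s\<in>X. measure (mdp_path Sm Am P pol s)
                {\<omega> \<in> space (mdp_path Sm Am P pol s). fst (\<omega> 1) \<in> X} = 1)"

end

theory Submission
  imports Defs
begin

text \<open>With reward \<open>\<one>\<^sub>U(S\<^sub>t)\<close> the value is \<open>V(s) = \<Sum>\<^sub>t \<gamma>\<^sup>t p\<^sub>t(s)\<close>, where
  \<open>p\<^sub>t(s) = Pr(S\<^sub>t \<in> U | S\<^sub>0 = s)\<close>. By the Markov property \<open>p\<^sub>t\<^sub>+\<^sub>1(s) = E[p\<^sub>t(S\<^sub>1) | S\<^sub>0 = s]\<close>,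
  hence \<open>E[V(S\<^sub>1) | S\<^sub>0 = s] = \<Sum>\<^sub>t \<gamma>\<^sup>t p\<^sub>t\<^sub>+\<^sub>1(s)\<close>. For \<open>s \<notin> U\<close> we have \<open>p\<^sub>0(s) = 0\<close>, so
  \<open>V(s) = \<gamma> E[V(S\<^sub>1) | S\<^sub>0 = s]\<close> and the difference is \<open>(1 - \<gamma>) \<Sum>\<^sub>t \<gamma>\<^sup>t p\<^sub>t\<^sub>+\<^sub>1(s)\<close>,
  which is positive because \<open>U\<close> is reached from \<open>s\<close> with positive probability.\<close>

lemma summable_norm_discounted:
  fixes a :: "nat \<Rightarrow> real"
  assumes "0 \<le> \<gamma>" "\<gamma> < 1" "\<And>t. \<bar>a t\<bar> \<le> B"
  shows "summable (\<lambda>t. norm (\<gamma>^t * a t))"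
proof (rule summable_comparison_test'[where g="\<lambda>t. B * \<gamma>^t" and N=0])
  show "summable (\<lambda>t. B * \<gamma>^t)"
    using assms by (intro summable_mult summable_geometric) auto
  show "norm (norm (\<gamma>^t * a t)) \<le> B * \<gamma>^t" for t
    using assms by (simp add: abs_mult mult.commute mult_right_mono)
qed

lemma integral_discounted_suminf:
  fixes f :: "nat \<Rightarrow> 'b \<Rightarrow> real"
  assumes M: "prob_space M" and \<gamma>: "0 \<le> \<gamma>" "\<gamma> < 1"
    and f: "\<And>t. f t \<in> borel_measurable M"
    and bounded: "\<And>t x. x \<in> space M \<Longrightarrow> \<bar>f t x\<bar> \<le> B"
  shows "(\<integral>x. (\<Sum>t. \<gamma>^t * f t x) \<partial>M) = (\<Sum>t. \<gamma>^t * (\<integral>x. f t x \<partial>M))"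
proof -
  interpret prob_space M by (rule M)
  have integrable: "integrable M (\<lambda>x. \<gamma>^t * f t x)" for t
  proof (rule integrable_const_bound[where B="\<gamma>^t * B"])
    show "AE x in M. norm (\<gamma>^t * f t x) \<le> \<gamma>^t * B"
      using bounded \<gamma> by (intro AE_I2) (simp add: abs_mult mult_left_mono)
  qed (use f in measurable)
  have "AE x in M. summable (\<lambda>t. norm (\<gamma>^t * f t x))"
    using bounded by (intro AE_I2 summable_norm_discounted[OF \<gamma>])
  moreover have "summable (\<lambda>t. \<integral>x. norm (\<gamma>^t * f t x) \<partial>M)"
  proof -
    have "\<bar>\<integral>x. \<bar>f t x\<bar> \<partial>M\<bar> \<le> B" for t
      using bounded f by (auto intro!: integral_le_const AE_I2 integrable_const_bound[where B=B])
    then have "summable (\<lambda>t. norm (\<gamma>^t * (\<integral>x. \<bar>f t x\<bar> \<partial>M)))"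
      by (rule summable_norm_discounted[OF \<gamma>])
    then show ?thesis
      using \<gamma> by (simp add: abs_mult)
  qed
  ultimately have "(\<integral>x. (\<Sum>t. \<gamma>^t * f t x) \<partial>M) = (\<Sum>t. \<integral>x. \<gamma>^t * f t x \<partial>M)"
    by (intro integral_suminf integrable)
  then show ?thesis
    by simp
qed

lemma discounted_sum_less_shifted:
  fixes a :: "nat \<Rightarrow> real"
  assumes \<gamma>: "0 < \<gamma>" "\<gamma> < 1"
    and nonneg: "\<And>t. 0 \<le> a t" and bounded: "\<And>t. a t \<le> B"
    and "a 0 = 0" and "0 < a t\<^sub>0"
  shows "(\<Sum>t. \<gamma>^t * a t) < (\<Sum>t. \<gamma>^t * a (Suc t))"
proof -
  have summable: "summable (\<lambda>t. \<gamma>^t * b t)" if "\<And>t. \<bar>b t\<bar> \<le> B" for b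
    using \<gamma> that by (intro summable_norm_cancel[OF summable_norm_discounted]) auto
  have "\<bar>a t\<bar> \<le> B" for t
    using nonneg[of t] bounded[of t] by simp
  then have summable_a: "summable (\<lambda>t. \<gamma>^t * a t)"
    and summable_shifted: "summable (\<lambda>t. \<gamma>^t * a (Suc t))"
    using summable[of a] summable[of "\<lambda>t. a (Suc t)"] by blast+
  obtain t\<^sub>1 where "t\<^sub>0 = Suc t\<^sub>1"
    using \<open>a 0 = 0\<close> \<open>0 < a t\<^sub>0\<close> by (cases t\<^sub>0) auto
  then have "0 < (\<Sum>t. \<gamma>^t * a (Suc t))"
    using \<gamma> nonneg \<open>0 < a t\<^sub>0\<close> by (intro suminf_pos2[OF summable_shifted, of t\<^sub>1]) auto
  moreover have "(\<Sum>t. \<gamma>^t * a t) = \<gamma> * (\<Sum>t. \<gamma>^t * a (Suc t))"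
    using suminf_split_head[OF summable_a] \<open>a 0 = 0\<close> suminf_mult[OF summable_shifted, of \<gamma>]
    by (simp add: mult.assoc)
  ultimately show ?thesis
    using \<gamma> by simp
qed

lemma hit_time_less_infinity_iff: "hit_time U \<omega> < \<infinity> \<longleftrightarrow> (\<exists>t. fst (\<omega> t) \<in> U)"
proof
  assume finite: "hit_time U \<omega> < \<infinity>"
  show "\<exists>t. fst (\<omega> t) \<in> U"
  proof (rule ccontr)
    assume "\<nexists>t. fst (\<omega> t) \<in> U"
    then have "hit_time U \<omega> = \<infinity>"
      by (simp add: hit_time_def top_enat_def)
    with finite show False
      by simp
  qed
next
  assume "\<exists>t. fst (\<omega> t) \<in> U"
  then obtain t where "fst (\<omega> t) \<in> U" ..
  then have "hit_time U \<omega> \<le> enat t"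
    unfolding hit_time_def by (auto intro: Inf_lower)
  then show "hit_time U \<omega> < \<infinity>"
    using enat_ord_simps(4) order.strict_trans1 by blast
qed

lemma prob_kernelD:
  assumes "K \<in> M \<rightarrow>\<^sub>M prob_algebra N" "x \<in> space M"
  shows "prob_space (K x)" and "sets (K x) = sets N"
  using measurable_space[OF assms] by (auto simp: space_prob_algebra)

lemma bind_assoc_prob_kernel:
  assumes "sets M = sets L" "K \<in> L \<rightarrow>\<^sub>M prob_algebra N" "K' \<in> N \<rightarrow>\<^sub>M prob_algebra R"
  shows "(M \<bind> K) \<bind> K' = M \<bind> (\<lambda>x. K x \<bind> K')"
  using assms by (intro bind_assoc measurable_prob_algebraD) (simp_all add: measurable_cong_sets[OF assms(1) refl])

lemma integral_bind_prob_kernel: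
  fixes f :: "'b \<Rightarrow> real"
  assumes M: "prob_space M" "sets M = sets L" and K: "K \<in> L \<rightarrow>\<^sub>M prob_algebra N"
    and f: "f \<in> borel_measurable N" "\<And>y. y \<in> space N \<Longrightarrow> \<bar>f y\<bar> \<le> B"
  shows "(\<integral>y. f y \<partial>(M \<bind> K)) = (\<integral>x. (\<integral>y. f y \<partial>K x) \<partial>M)"
proof (rule integral_bind[OF f, where B'=1])
  show "K \<in> M \<rightarrow>\<^sub>M subprob_algebra N"
    using K by (simp add: measurable_cong_sets[OF M(2) refl] measurable_prob_algebraD)
  show "finite_measure M"
    using M(1) by (simp add: prob_space_def)
  have "space M = space L"
    using M(2) by (rule sets_eq_imp_space_eq)
  then show "AE x in M. emeasure (K x) (space (K x)) \<le> ennreal 1"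
    using prob_kernelD(1)[OF K] by (auto intro!: AE_I2 simp: prob_space.emeasure_space_1)
qed

locale stationary_mdp =
  fixes Sm :: "'s measure" and Am :: "'a measure"
    and P :: "'s \<times> 'a \<Rightarrow> 's measure" and pol :: "'s \<Rightarrow> 'a measure"
  assumes is_mdp: "is_mdp Sm Am P pol"
begin

abbreviation "SA \<equiv> Sm \<Otimes>\<^sub>M Am"
abbreviation "sa \<equiv> sa_dist Sm Am pol"

definition step :: "'s \<times> 'a \<Rightarrow> ('s \<times> 'a) measure" where
  "step z = P z \<bind> sa"

text \<open>\<open>sa_law t y\<close> is the law of \<open>(S\<^sub>t, A\<^sub>t)\<close> given \<open>S\<^sub>0 = y\<close>, and
  \<open>visit_prob U t y\<close> is \<open>Pr(S\<^sub>t \<in> U | S\<^sub>0 = y)\<close>.\<close>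

primrec sa_law :: "nat \<Rightarrow> 's \<Rightarrow> ('s \<times> 'a) measure" where
  "sa_law 0 y = sa y"
| "sa_law (Suc t) y = sa_law t y \<bind> step"

definition next_state :: "'s \<Rightarrow> 's measure" where
  "next_state y = sa y \<bind> P"

definition visit_prob :: "'s set \<Rightarrow> nat \<Rightarrow> 's \<Rightarrow> real" where
  "visit_prob U t y = (\<integral>z. indicator U (fst z) \<partial>sa_law t y)"

lemma P_measurable: "P \<in> SA \<rightarrow>\<^sub>M prob_algebra Sm"
  and pol_measurable: "pol \<in> Sm \<rightarrow>\<^sub>M prob_algebra Am"
  using is_mdp by (auto simp: is_mdp_def)

lemma sa_measurable: "sa \<in> Sm \<rightarrow>\<^sub>M prob_algebra SA"
  unfolding sa_dist_def[abs_def]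
  by (rule measurable_distr_prob_space2[OF pol_measurable]) simp

lemma step_measurable: "step \<in> SA \<rightarrow>\<^sub>M prob_algebra SA"
  unfolding step_def[abs_def] by (rule measurable_bind_prob_space[OF P_measurable sa_measurable])

lemma next_state_measurable: "next_state \<in> Sm \<rightarrow>\<^sub>M prob_algebra Sm"
  unfolding next_state_def[abs_def] by (rule measurable_bind_prob_space[OF sa_measurable P_measurable])

lemma sa_law_measurable: "sa_law t \<in> Sm \<rightarrow>\<^sub>M prob_algebra SA"
proof (induction t)
  case 0
  then show ?case
    using sa_measurable by (simp add: sa_law.simps(1)[abs_def])
next
  case (Suc t)
  then show ?case
    using measurable_bind_prob_space[OF Suc step_measurable] by (simp add: sa_law.simps(2)[abs_def])
qed

lemma sa_law_Suc_next_state: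
  assumes y: "y \<in> space Sm"
  shows "sa_law (Suc t) y = next_state y \<bind> sa_law t"
proof (induction t)
  case 0
  have "sa_law (Suc 0) y = sa y \<bind> step"
    by simp
  also have "\<dots> = (sa y \<bind> P) \<bind> sa"
    using bind_assoc_prob_kernel[OF prob_kernelD(2)[OF sa_measurable y] P_measurable sa_measurable]
    by (simp add: step_def[abs_def])
  also have "\<dots> = next_state y \<bind> sa_law 0"
  proof -
    have "sa_law 0 = sa"
      by (rule ext) simp
    then show ?thesis
      by (simp add: next_state_def)
  qed
  finally show ?case .
next
  case (Suc t)
  have "sa_law (Suc (Suc t)) y = (next_state y \<bind> sa_law t) \<bind> step"
    using Suc by simp
  also have "\<dots> = next_state y \<bind> sa_law (Suc t)"
    using bind_assoc_prob_kernel[OF prob_kernelD(2)[OF next_state_measurable y]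
        sa_law_measurable step_measurable]
    by (simp add: sa_law.simps(2)[abs_def])
  finally show ?case .
qed

lemma integral_sa_fst:
  fixes f :: "'s \<Rightarrow> real"
  assumes y: "y \<in> space Sm" and f: "f \<in> borel_measurable Sm"
  shows "(\<integral>z. f (fst z) \<partial>sa y) = f y"
proof -
  have "(\<lambda>a. (y, a)) \<in> pol y \<rightarrow>\<^sub>M SA"
    using y by (simp add: measurable_cong_sets[OF prob_kernelD(2)[OF pol_measurable y]])
  then have "(\<integral>z. f (fst z) \<partial>sa y) = (\<integral>a. f y \<partial>pol y)"
    unfolding sa_dist_def using f by (subst integral_distr) auto
  also have "\<dots> = f y"
    using prob_kernelD(1)[OF pol_measurable y] by (simp add: prob_space.prob_space)
  finally show ?thesis .
qed

lemma integral_sa_law_Suc: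
  fixes g :: "'s \<times> 'a \<Rightarrow> real"
  assumes y: "y \<in> space Sm" and g: "g \<in> borel_measurable SA" "\<And>z. z \<in> space SA \<Longrightarrow> \<bar>g z\<bar> \<le> B"
  shows "(\<integral>z. g z \<partial>sa_law (Suc t) y) = (\<integral>y'. (\<integral>z. g z \<partial>sa_law t y') \<partial>next_state y)"
  unfolding sa_law_Suc_next_state[OF y]
  by (rule integral_bind_prob_kernel[OF prob_kernelD[OF next_state_measurable y] sa_law_measurable g])

lemma visit_prob_measurable[measurable]:
  assumes [measurable]: "U \<in> sets Sm"
  shows "visit_prob U t \<in> borel_measurable Sm"
  unfolding visit_prob_def[abs_def]
  by (rule measurable_compose[OF measurable_prob_algebraD[OF sa_law_measurable]]) measurable

lemma visit_prob_bounds: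
  assumes U: "U \<in> sets Sm" and y: "y \<in> space Sm"
  shows "0 \<le> visit_prob U t y" and "visit_prob U t y \<le> 1"
proof -
  interpret prob_space "sa_law t y"
    by (rule prob_kernelD(1)[OF sa_law_measurable y])
  have "(\<lambda>z. indicator U (fst z) :: real) \<in> borel_measurable (sa_law t y)"
    using U by (simp add: measurable_cong_sets[OF prob_kernelD(2)[OF sa_law_measurable y]])
  then have "integrable (sa_law t y) (\<lambda>z. indicator U (fst z) :: real)"
    by (intro integrable_const_bound[where B=1]) auto
  then show "0 \<le> visit_prob U t y" "visit_prob U t y \<le> 1"
    unfolding visit_prob_def by (auto intro!: integral_le_const AE_I2)
qed

lemma visit_prob_0:
  assumes [measurable]: "U \<in> sets Sm" and "y \<in> space Sm"
  shows "visit_prob U 0 y = indicator U y"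
  unfolding visit_prob_def sa_law.simps using assms by (intro integral_sa_fst) measurable

lemma visit_prob_Suc:
  assumes [measurable]: "U \<in> sets Sm" and y: "y \<in> space Sm"
  shows "visit_prob U (Suc t) y = (\<integral>y'. visit_prob U t y' \<partial>next_state y)"
proof -
  have "(\<lambda>z. indicator U (fst z) :: real) \<in> borel_measurable SA"
    by measurable
  then show ?thesis
    unfolding visit_prob_def by (rule integral_sa_law_Suc[OF y, where B=1]) (simp split: split_indicator)
qed

lemma mdp_kernel_0: "mdp_kernel Sm Am P pol s 0 = (\<lambda>_. sa s)"
  and mdp_kernel_Suc: "mdp_kernel Sm Am P pol s (Suc n) = (\<lambda>\<omega>. step (\<omega> n))"
  by (simp_all add: mdp_kernel_def step_def fun_eq_iff)

lemma mdp_kernel_measurable: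
  assumes s: "s \<in> space Sm"
  shows "mdp_kernel Sm Am P pol s i \<in> Pi\<^sub>M {0..<i} (\<lambda>_. SA) \<rightarrow>\<^sub>M prob_algebra SA"
proof (cases i)
  case 0
  then show ?thesis
    using measurable_space[OF sa_measurable s] by (simp add: mdp_kernel_0)
next
  case (Suc n)
  have "(\<lambda>\<omega>. \<omega> n) \<in> Pi\<^sub>M {0..<Suc n} (\<lambda>_. SA) \<rightarrow>\<^sub>M SA"
    by (intro measurable_component_singleton) simp
  from measurable_compose[OF this step_measurable] show ?thesis
    using Suc by (simp add: mdp_kernel_Suc)
qed

lemma Ionescu_Tulcea_mdp_kernel:
  assumes s: "s \<in> space Sm"
  shows "Ionescu_Tulcea (mdp_kernel Sm Am P pol s) (\<lambda>_. SA)"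
  by (rule Ionescu_Tulcea.intro[OF measurable_prob_algebraD[OF mdp_kernel_measurable[OF s]]
        prob_kernelD(1)[OF mdp_kernel_measurable[OF s]]])

end

locale mdp_from_state = stationary_mdp Sm Am P pol
  for Sm :: "'s measure" and Am :: "'a measure"
    and P :: "'s \<times> 'a \<Rightarrow> 's measure" and pol :: "'s \<Rightarrow> 'a measure" +
  fixes s :: 's
  assumes start: "s \<in> space Sm"
begin

sublocale T: Ionescu_Tulcea "mdp_kernel Sm Am P pol s" "\<lambda>_. SA"
  by (rule Ionescu_Tulcea_mdp_kernel[OF start])

abbreviation "path_law \<equiv> mdp_path Sm Am P pol s"

lemma distr_eP_last:
  assumes \<omega>: "\<omega> \<in> space (Pi\<^sub>M {0..<n} (\<lambda>_. SA))"
  shows "distr (T.eP n \<omega>) SA (\<lambda>x. x n) = mdp_kernel Sm Am P pol s n \<omega>"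
proof -
  have "(\<lambda>x. x n) \<in> Pi\<^sub>M {0..<Suc n} (\<lambda>_. SA) \<rightarrow>\<^sub>M SA"
    by (intro measurable_component_singleton) simp
  moreover have "fun_upd \<omega> n \<in> mdp_kernel Sm Am P pol s n \<omega> \<rightarrow>\<^sub>M Pi\<^sub>M {0..<Suc n} (\<lambda>_. SA)"
    unfolding measurable_cong_sets[OF T.sets_P[OF \<omega>] refl]
    by (rule measurable_fun_upd[where J="{0..<n}"]) (use \<omega> in auto)
  ultimately have "distr (T.eP n \<omega>) SA (\<lambda>x. x n) = distr (mdp_kernel Sm Am P pol s n \<omega>) SA (\<lambda>x. x)"
    unfolding T.eP_def by (subst distr_distr) (simp_all add: comp_def)
  also have "\<dots> = mdp_kernel Sm Am P pol s n \<omega>"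
    by (rule distr_id2) (simp add: T.sets_P[OF \<omega>])
  finally show ?thesis .
qed

lemma sets_C_start: "sets (T.C 0 m (\<lambda>_. undefined)) = sets (Pi\<^sub>M {0..<m} (\<lambda>_. SA))"
  and space_C_start: "space (T.C 0 m (\<lambda>_. undefined)) = space (Pi\<^sub>M {0..<m} (\<lambda>_. SA))"
  and prob_space_C_start: "prob_space (T.C 0 m (\<lambda>_. undefined))"
  using T.sets_C[of "\<lambda>_. undefined" 0 m] T.space_C[of "\<lambda>_. undefined" 0 m]
    T.prob_space_C[of "\<lambda>_. undefined" 0 m]
  by simp_all

lemma distr_C_last: "distr (T.C 0 (Suc t) (\<lambda>_. undefined)) SA (\<lambda>x. x t) = sa_law t s"
proof (induction t)
  case 0
  have "T.C 0 (Suc 0) (\<lambda>_. undefined) = T.eP 0 (\<lambda>_. undefined)"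
    using bind_return[OF T.measurable_eP, of "\<lambda>_. undefined" 0] by simp
  then show ?case
    using distr_eP_last[of "\<lambda>_. undefined" 0] by (simp add: mdp_kernel_0)
next
  case (Suc t)
  let ?C = "T.C 0 (Suc t) (\<lambda>_. undefined)"
  have C_nonempty: "space ?C \<noteq> {}"
    using prob_space_C_start prob_space.not_empty by blast
  have last_measurable: "(\<lambda>x. x (Suc t)) \<in> Pi\<^sub>M {0..<Suc (Suc t)} (\<lambda>_. SA) \<rightarrow>\<^sub>M SA"
    by (intro measurable_component_singleton) simp
  have t_measurable: "(\<lambda>x. x t) \<in> ?C \<rightarrow>\<^sub>M SA"
    unfolding measurable_cong_sets[OF sets_C_start refl]
    by (intro measurable_component_singleton) simp
  have eP_measurable: "T.eP (Suc t) \<in> ?C \<rightarrow>\<^sub>M subprob_algebra (Pi\<^sub>M {0..<Suc (Suc t)} (\<lambda>_. SA))"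
    unfolding measurable_cong_sets[OF sets_C_start refl] using T.measurable_eP[of "Suc t"] by simp
  have "distr (T.C 0 (Suc (Suc t)) (\<lambda>_. undefined)) SA (\<lambda>x. x (Suc t))
      = ?C \<bind> (\<lambda>\<omega>. distr (T.eP (Suc t) \<omega>) SA (\<lambda>x. x (Suc t)))"
    using distr_bind[OF eP_measurable C_nonempty last_measurable] by simp
  also have "\<dots> = ?C \<bind> (\<lambda>\<omega>. step (\<omega> t))"
  proof (rule bind_cong[OF refl])
    fix \<omega> assume "\<omega> \<in> space ?C"
    then have "\<omega> \<in> space (Pi\<^sub>M {0..<Suc t} (\<lambda>_. SA))"
      using space_C_start by blast
    from distr_eP_last[OF this] show "distr (T.eP (Suc t) \<omega>) SA (\<lambda>x. x (Suc t)) = step (\<omega> t)"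
      by (simp add: mdp_kernel_Suc)
  qed
  also have "\<dots> = distr ?C SA (\<lambda>x. x t) \<bind> step"
    by (rule bind_distr[OF t_measurable measurable_prob_algebraD[OF step_measurable] C_nonempty, symmetric])
  finally show ?case
    using Suc by simp
qed

lemma sets_path_law: "sets path_law = sets (Pi\<^sub>M UNIV (\<lambda>_. SA))"
  by (simp add: mdp_path_def)

lemma path_component_measurable[measurable]: "(\<lambda>\<omega>. \<omega> t) \<in> path_law \<rightarrow>\<^sub>M SA"
  unfolding measurable_cong_sets[OF sets_path_law refl] by (rule measurable_component_singleton) simp

lemma distr_path_law_component: "distr path_law SA (\<lambda>\<omega>. \<omega> t) = sa_law t s"
proof -
  let ?J = "{0..<Suc t}"
  have up_to: "T.up_to ?J = Suc t"
    using T.up_to_iff_Ico[of ?J] T.up_to[of ?J] by (auto intro: antisym)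
  have restrict_path: "(\<lambda>x. restrict x ?J) \<in> path_law \<rightarrow>\<^sub>M Pi\<^sub>M ?J (\<lambda>_. SA)"
    unfolding measurable_cong_sets[OF sets_path_law refl] by (rule measurable_restrict_subset) simp
  have "distr path_law SA (\<lambda>\<omega>. \<omega> t) = distr path_law SA ((\<lambda>x. x t) \<circ> (\<lambda>x. restrict x ?J))"
    by (rule distr_cong) auto
  also have "\<dots> = distr (distr path_law (Pi\<^sub>M ?J (\<lambda>_. SA)) (\<lambda>x. restrict x ?J)) SA (\<lambda>x. x t)"
    by (rule distr_distr[OF _ restrict_path, symmetric]) simp
  also have "distr path_law (Pi\<^sub>M ?J (\<lambda>_. SA)) (\<lambda>x. restrict x ?J) = T.CI ?J"
    unfolding mdp_path_def by (rule T.distr_lim) simp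
  also have "\<dots> = distr (T.C 0 (Suc t) (\<lambda>_. undefined)) (Pi\<^sub>M ?J (\<lambda>_. SA)) (\<lambda>x. restrict x ?J)"
    unfolding T.CI_def up_to ..
  also have "distr \<dots> SA (\<lambda>x. x t) = distr (T.C 0 (Suc t) (\<lambda>_. undefined)) SA (\<lambda>x. x t)"
  proof -
    have "(\<lambda>x. restrict x ?J) \<in> T.C 0 (Suc t) (\<lambda>_. undefined) \<rightarrow>\<^sub>M Pi\<^sub>M ?J (\<lambda>_. SA)"
      unfolding measurable_cong_sets[OF sets_C_start refl] by (rule measurable_restrict_subset) simp
    then show ?thesis
      by (subst distr_distr) (auto intro!: distr_cong)
  qed
  finally show ?thesis
    by (simp only: distr_C_last)
qed

lemma prob_space_path_law: "prob_space path_law"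
  using prob_kernelD(1)[OF sa_law_measurable start, of 0]
  by (intro prob_space_distrD[OF path_component_measurable[of 0]]) (simp add: distr_path_law_component)

end

lemma (in stationary_mdp) mdp_from_state_at: "s \<in> space Sm \<Longrightarrow> mdp_from_state Sm Am P pol s"
  by (intro mdp_from_state.intro mdp_from_state_axioms.intro) unfold_locales

context mdp_from_state
begin

lemma integral_path_law_state:
  fixes f :: "'s \<Rightarrow> real"
  assumes f: "f \<in> borel_measurable Sm"
  shows "(\<integral>\<omega>. f (fst (\<omega> t)) \<partial>path_law) = (\<integral>z. f (fst z) \<partial>sa_law t s)"
  unfolding distr_path_law_component[symmetric]
  by (rule integral_distr[OF path_component_measurable, symmetric]) (use f in measurable)

lemma integral_path_law_next_state:
  fixes f :: "'s \<Rightarrow> real"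
  assumes f: "f \<in> borel_measurable Sm" "\<And>y. y \<in> space Sm \<Longrightarrow> \<bar>f y\<bar> \<le> B"
  shows "(\<integral>\<omega>. f (fst (\<omega> 1)) \<partial>path_law) = (\<integral>y. f y \<partial>next_state s)"
proof -
  have "(\<integral>\<omega>. f (fst (\<omega> 1)) \<partial>path_law) = (\<integral>z. f (fst z) \<partial>sa_law (Suc 0) s)"
    using integral_path_law_state[OF f(1)] by simp
  also have "\<dots> = (\<integral>y. (\<integral>z. f (fst z) \<partial>sa_law 0 y) \<partial>next_state s)"
    using f by (intro integral_sa_law_Suc[OF start]) (auto simp: space_pair_measure)
  also have "\<dots> = (\<integral>y. f y \<partial>next_state s)"
  proof (rule Bochner_Integration.integral_cong[OF refl])
    fix y assume "y \<in> space (next_state s)"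
    then have "y \<in> space Sm"
      using prob_kernelD(2)[OF next_state_measurable start] sets_eq_imp_space_eq by blast
    then show "(\<integral>z. f (fst z) \<partial>sa_law 0 y) = f y"
      by (simp add: integral_sa_fst f(1))
  qed
  finally show ?thesis .
qed

lemma value_fun_indicator:
  assumes [measurable]: "U \<in> sets Sm" and \<gamma>: "0 \<le> \<gamma>" "\<gamma> < 1"
  shows "value_fun Sm Am P pol (\<lambda>s a s'. indicator U s) \<gamma> s = (\<Sum>t. \<gamma>^t * visit_prob U t s)"
proof -
  have "value_fun Sm Am P pol (\<lambda>s a s'. indicator U s) \<gamma> s
      = (\<integral>\<omega>. (\<Sum>t. \<gamma>^t * indicator U (fst (\<omega> t))) \<partial>path_law)"
    by (simp add: value_fun_def)
  also have "\<dots> = (\<Sum>t. \<gamma>^t * (\<integral>\<omega>. indicator U (fst (\<omega> t)) \<partial>path_law))"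
    by (rule integral_discounted_suminf[OF prob_space_path_law \<gamma>, where B=1]) auto
  also have "\<dots> = (\<Sum>t. \<gamma>^t * visit_prob U t s)"
    by (simp add: integral_path_law_state visit_prob_def)
  finally show ?thesis .
qed

lemma integral_value_fun_next_state:
  assumes U[measurable]: "U \<in> sets Sm" and \<gamma>: "0 \<le> \<gamma>" "\<gamma> < 1"
  shows "(\<integral>\<omega>. value_fun Sm Am P pol (\<lambda>s a s'. indicator U s) \<gamma> (fst (\<omega> 1)) \<partial>path_law)
    = (\<Sum>t. \<gamma>^t * visit_prob U (Suc t) s)"
proof -
  have state_1: "fst (\<omega> 1) \<in> space Sm" if "\<omega> \<in> space path_law" for \<omega>
    using measurable_space[OF path_component_measurable[of 1] that] by (auto simp: space_pair_measure)
  have "(\<integral>\<omega>. value_fun Sm Am P pol (\<lambda>s a s'. indicator U s) \<gamma> (fst (\<omega> 1)) \<partial>path_law)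
      = (\<integral>\<omega>. (\<Sum>t. \<gamma>^t * visit_prob U t (fst (\<omega> 1))) \<partial>path_law)"
    using mdp_from_state.value_fun_indicator[OF mdp_from_state_at[OF state_1] U \<gamma>]
    by (intro Bochner_Integration.integral_cong) auto
  also have "\<dots> = (\<Sum>t. \<gamma>^t * (\<integral>\<omega>. visit_prob U t (fst (\<omega> 1)) \<partial>path_law))"
  proof (rule integral_discounted_suminf[OF prob_space_path_law \<gamma>, where B=1])
    show "(\<lambda>\<omega>. visit_prob U t (fst (\<omega> 1))) \<in> borel_measurable path_law" for t
      by measurable
    show "\<bar>visit_prob U t (fst (\<omega> 1))\<bar> \<le> 1" if "\<omega> \<in> space path_law" for t \<omega>
      using visit_prob_bounds[OF U state_1[OF that]] by simp
  qed
  also have "\<dots> = (\<Sum>t. \<gamma>^t * visit_prob U (Suc t) s)"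
  proof -
    have "(\<integral>\<omega>. visit_prob U t (fst (\<omega> 1)) \<partial>path_law) = (\<integral>y. visit_prob U t y \<partial>next_state s)" for t
      using visit_prob_bounds[OF U] by (intro integral_path_law_next_state[where B=1] visit_prob_measurable[OF U]) auto
    then show ?thesis
      by (simp only: visit_prob_Suc[OF U start])
  qed
  finally show ?thesis .
qed

lemma visit_prob_pos_if_hits:
  assumes U[measurable]: "U \<in> sets Sm"
    and hits: "0 < measure path_law {\<omega> \<in> space path_law. hit_time U \<omega> < \<infinity>}"
  shows "\<exists>t. 0 < visit_prob U t s"
proof (rule ccontr)
  assume "\<nexists>t. 0 < visit_prob U t s"
  then have never: "visit_prob U t s = 0" for t
    using visit_prob_bounds(1)[OF U start, of t] by (metis less_eq_real_def)
  define E where "E t = {\<omega> \<in> space path_law. fst (\<omega> t) \<in> U}" for t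
  have E_sets: "E t \<in> sets path_law" for t
    unfolding E_def by measurable
  have prob_E: "measure path_law (E t) = visit_prob U t s" for t
  proof -
    have "visit_prob U t s = (\<integral>\<omega>. indicator U (fst (\<omega> t)) \<partial>path_law)"
      by (simp add: integral_path_law_state visit_prob_def)
    also have "\<dots> = (\<integral>\<omega>. indicator (E t) \<omega> \<partial>path_law)"
      by (rule Bochner_Integration.integral_cong) (auto simp: E_def indicator_def)
    finally show ?thesis
      using E_sets[of t] sets.sets_into_space by (simp add: Int_absorb2)
  qed
  interpret prob_space path_law
    by (rule prob_space_path_law)
  have "emeasure path_law (E t) = 0" for t
    using prob_E never by (simp add: emeasure_eq_measure)
  then have "emeasure path_law (\<Union>t. E t) = 0"
    using E_sets by (intro emeasure_UN_eq_0) auto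
  moreover have "{\<omega> \<in> space path_law. hit_time U \<omega> < \<infinity>} = (\<Union>t. E t)"
    unfolding hit_time_less_infinity_iff E_def by blast
  ultimately show False
    using hits by (simp add: measure_def)
qed

end

theorem lemma3:
  fixes Sm :: "'s measure" and Am :: "'a measure"
    and P :: "'s \<times> 'a \<Rightarrow> 's measure" and pol :: "'s \<Rightarrow> 'a measure"
    and U I :: "'s set" and \<gamma> :: real
  assumes mdp: "is_mdp Sm Am P pol"
    and U: "U \<in> sets Sm"
    and \<gamma>: "0 < \<gamma>" "\<gamma> < 1"
    and I: "I \<in> sets Sm"
    and absorb: "absorbing Sm Am P pol I"
    and reach: "\<forall>s \<in> I - U. measure (mdp_path Sm Am P pol s)
                   {\<omega> \<in> space (mdp_path Sm Am P pol s). hit_time U \<omega> < \<infinity>} = 1"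
  shows "\<forall>s \<in> I - U.
           (\<integral>\<omega>. value_fun Sm Am P pol (\<lambda>s a s'. indicator U s) \<gamma> (fst (\<omega> 1)) \<partial>mdp_path Sm Am P pol s)
             - value_fun Sm Am P pol (\<lambda>s a s'. indicator U s) \<gamma> s > 0"
proof
  fix s assume s: "s \<in> I - U"
  then have "s \<in> space Sm"
    using I sets.sets_into_space by blast
  then interpret mdp_from_state Sm Am P pol s
    by (rule stationary_mdp.mdp_from_state_at[OF stationary_mdp.intro[OF mdp]])
  have "visit_prob U 0 s = 0"
    using visit_prob_0[OF U start] s by simp
  moreover obtain t where "0 < visit_prob U t s"
    using visit_prob_pos_if_hits[OF U] reach s by auto
  ultimately have "(\<Sum>t. \<gamma>^t * visit_prob U t s) < (\<Sum>t. \<gamma>^t * visit_prob U (Suc t) s)"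
    using visit_prob_bounds[OF U start] \<gamma> by (intro discounted_sum_less_shifted)
  then show "(\<integral>\<omega>. value_fun Sm Am P pol (\<lambda>s a s'. indicator U s) \<gamma> (fst (\<omega> 1)) \<partial>path_law)
      - value_fun Sm Am P pol (\<lambda>s a s'. indicator U s) \<gamma> s > 0"
    using \<gamma> by (simp only: value_fun_indicator[OF U] integral_value_fun_next_state[OF U])
qed

end
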